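(* Let $P_1,\dots,P_n\subset\mathbb R^n$ be polytopes. The following are equivalent: (1) the Cayley polytope $\mathcal C(P_1,\dots,P_n)$ is a fully mixed $(2n-1)$-dimensional simplex; (2) $P_1,\dots,P_n$ are segments with linearly independent directions.
   Context: The Cayley polytope $\mathcal C(P_1,\dots,P_n)$ is the convex hull in $\mathbb R^n\times\mathbb R^n$ of $\bigcup_{i=1}^nP_i\times\{e_i\}$, with $e_1,\dots,e_n$ the standard basis of the second factor $\mathbb R^n$; it is called fully mixed if $\dim P_i\ge1$ for all $i$. A segment is a polytope of dimension exactly 1. *)

theory Defs
  imports "HOL-Analysis.Analysis"
begin

text \<open>Cayley polytope of P_i (i ranging over the index type 'n, so n = CARD('n)),
  living in R^n x R^n, with e_i = axis i 1.\<close>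
definition cayley :: "('n::finite \<Rightarrow> (real^'n) set) \<Rightarrow> ((real^'n) \<times> (real^'n)) set" where
  "cayley P = convex hull (\<Union>i. (\<lambda>x. (x, axis i 1)) ` P i)"

definition fully_mixed :: "('n::finite \<Rightarrow> (real^'n) set) \<Rightarrow> bool" where
  "fully_mixed P \<longleftrightarrow> (\<forall>i. aff_dim (P i) \<ge> 1)"

definition is_segment :: "'a::euclidean_space set \<Rightarrow> bool" where
  "is_segment S \<longleftrightarrow> polytope S \<and> aff_dim S = 1"

end

theory Submission
  imports Defs
begin

text \<open>
  The Cayley polytope is the convex hull of the slices \<open>P i \<times> {e i}\<close>, and each slice is a face
  of it, cut out by the functional \<open>(0, e i)\<close>. Hence the vertices of the Cayley polytope are
  exactly the lifted vertices of the \<open>P i\<close>. A \<open>(2n - 1)\<close>-simplex has \<open>2n\<close> vertices, and full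
  mixedness gives every \<open>P i\<close> at least two, so each has exactly two and is a segment
  \<open>[a i, a i + d i]\<close>. For such segments, comparing second coordinates shows that an affine
  relation among the \<open>2n\<close> lifted endpoints puts opposite weights on the two endpoints of each
  segment, so it is the same thing as a linear relation among the directions \<open>d i\<close>.
\<close>

lemma inj_independent_iff_sum_eq_0:
  fixes d :: "'i::finite \<Rightarrow> 'a::real_vector"
  shows "inj d \<and> independent (range d) \<longleftrightarrow> (\<forall>c. (\<Sum>i\<in>UNIV. c i *\<^sub>R d i) = 0 \<longrightarrow> (\<forall>i. c i = 0))"
    (is "_ \<longleftrightarrow> ?only_trivial")
proof
  assume d: "inj d \<and> independent (range d)"
  show ?only_trivial
  proof (intro allI impI)
    fix c i assume c: "(\<Sum>i\<in>UNIV. c i *\<^sub>R d i) = 0"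
    show "c i = 0"
    proof (rule ccontr)
      assume "c i \<noteq> 0"
      moreover have "(\<Sum>v\<in>range d. c (inv d v) *\<^sub>R v) = 0"
        using d c by (simp add: sum.reindex)
      ultimately have "dependent (range d)"
        unfolding dependent_finite[OF finite_imageI[OF finite]] using d
        by (intro exI[of _ "\<lambda>v. c (inv d v)"]) auto
      with d show False by blast
    qed
  qed
next
  assume only_trivial: ?only_trivial
  have "inj d"
  proof (rule injI, rule ccontr)
    fix i j assume "d i = d j" "i \<noteq> j"
    define c where "c k = (if k = i then 1 else 0) - (if k = j then 1 else (0::real))" for k
    have "(\<Sum>k\<in>UNIV. c k *\<^sub>R d k) = d i - d j"
      by (simp add: c_def scaleR_left_diff_distrib sum_subtractf if_distrib[of "\<lambda>r. r *\<^sub>R _"]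
          cong: if_cong)
    then have "c i = 0"
      using only_trivial \<open>d i = d j\<close> by simp
    then show False
      using \<open>i \<noteq> j\<close> by (simp add: c_def)
  qed
  moreover have "independent (range d)"
  proof
    assume "dependent (range d)"
    then obtain u where "\<exists>v\<in>range d. u v \<noteq> 0" "(\<Sum>v\<in>range d. u v *\<^sub>R v) = 0"
      unfolding dependent_finite[OF finite_imageI[OF finite]] by blast
    then show False
      using only_trivial \<open>inj d\<close> by (auto simp: sum.reindex)
  qed
  ultimately show "inj d \<and> independent (range d)" ..
qed

lemma cayley_eq_convex_hull_slices:
  "cayley P = convex hull (\<Union>i. P i \<times> {axis i 1})"
  unfolding cayley_def by (rule arg_cong[where f="\<lambda>S. convex hull S"]) auto

lemma slice_face_of_cayley:
  fixes P :: "'n::finite \<Rightarrow> (real^'n) set"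
  assumes "\<And>j. compact (P j)" "\<And>j. convex (P j)"
  shows "P i \<times> {axis i 1} face_of cayley P"
proof -
  define Q where "Q = (\<Union>j. P j \<times> {axis j (1::real)})"
  define v where "v = ((0::real^'n), axis i (1::real))"
  define F where "F = convex hull Q \<inter> {z. v \<bullet> z = 1}"
  have v: "v \<bullet> z = (if j = i then 1 else 0)" if "z \<in> P j \<times> {axis j 1}" for j z
    using that by (auto simp: v_def inner_axis_axis)
  have "convex hull Q \<subseteq> {z. v \<bullet> z \<le> 1}"
    using v by (intro hull_minimal convex_halfspace_le) (force simp: Q_def)
  then have face: "F face_of convex hull Q"
    unfolding F_def by (intro face_of_Int_supporting_hyperplane_le) auto
  moreover have "F = P i \<times> {axis i 1}"
  proof
    show "P i \<times> {axis i 1} \<subseteq> F"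
      using v[of _ i] by (auto simp: F_def Q_def intro: hull_inc)
    have "compact Q"
      unfolding Q_def using assms by (intro compact_UN compact_Times) auto
    then obtain S where S: "S \<subseteq> Q" "F = convex hull S"
      by (rule face_of_convex_hull_subset[OF _ face])
    have "S \<subseteq> P i \<times> {axis i 1}"
    proof
      fix z assume "z \<in> S"
      then have "z \<in> F" and "z \<in> Q"
        using S hull_inc by auto
      then obtain j where j: "z \<in> P j \<times> {axis j 1}" and "v \<bullet> z = 1"
        by (auto simp: F_def Q_def)
      then have "j = i"
        using v[OF j] by (simp split: if_splits)
      then show "z \<in> P i \<times> {axis i 1}"
        using j by simp
    qed
    then show "F \<subseteq> P i \<times> {axis i 1}"
      unfolding S(2) using assms by (intro hull_minimal convex_Times) auto
  qed
  ultimately show ?thesis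
    unfolding cayley_eq_convex_hull_slices Q_def[symmetric] by simp
qed

lemma extreme_point_of_Times_singleton:
  fixes S :: "'a::euclidean_space set" and c :: "'b::euclidean_space"
  shows "(x, c) extreme_point_of S \<times> {c} \<longleftrightarrow> x extreme_point_of S"
proof -
  have "{x} \<times> {c} = {(x, c)}"
    by simp
  then have "(x, c) extreme_point_of S \<times> {c} \<longleftrightarrow> {x} \<times> {c} face_of S \<times> {c}"
    by (simp only: face_of_singleton)
  also have "\<dots> \<longleftrightarrow> x extreme_point_of S"
    unfolding face_of_Times_eq by (simp add: face_of_singleton)
  finally show ?thesis .
qed

lemma extreme_point_of_cayley:
  fixes P :: "'n::finite \<Rightarrow> (real^'n) set"
  assumes "\<And>j. compact (P j)" "\<And>j. convex (P j)"
  shows "p extreme_point_of cayley P \<longleftrightarrow> (\<exists>i x. p = (x, axis i 1) \<and> x extreme_point_of P i)"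
proof
  assume p: "p extreme_point_of cayley P"
  then have "p \<in> (\<Union>j. P j \<times> {axis j 1})"
    unfolding cayley_eq_convex_hull_slices by (rule extreme_point_of_convex_hull)
  then obtain i x where x: "x \<in> P i" and p_eq: "p = (x, axis i 1)"
    by blast
  have "{p} face_of cayley P"
    using p by (simp add: face_of_singleton)
  moreover have "{p} \<subseteq> P i \<times> {axis i 1}"
    using x p_eq by simp
  moreover have "P i \<times> {axis i 1} \<subseteq> cayley P"
    using slice_face_of_cayley[OF assms] by (rule face_of_imp_subset)
  ultimately have "{p} face_of P i \<times> {axis i 1}"
    by (rule face_of_subset)
  then show "\<exists>i x. p = (x, axis i 1) \<and> x extreme_point_of P i"
    using p_eq by (auto simp: face_of_singleton extreme_point_of_Times_singleton)
next
  assume "\<exists>i x. p = (x, axis i 1) \<and> x extreme_point_of P i"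
  then obtain i x where p_eq: "p = (x, axis i 1)" and "x extreme_point_of P i"
    by blast
  then have "{p} face_of P i \<times> {axis i 1}"
    by (simp add: face_of_singleton extreme_point_of_Times_singleton)
  then have "{p} face_of cayley P"
    using slice_face_of_cayley[OF assms] by (rule face_of_trans)
  then show "p extreme_point_of cayley P"
    by (simp add: face_of_singleton)
qed

lemma convex_hull_Union_convex_hull:
  "convex hull (\<Union>i\<in>I. convex hull W i) = convex hull (\<Union>i\<in>I. W i)"
proof (rule antisym)
  show "convex hull (\<Union>i\<in>I. convex hull W i) \<subseteq> convex hull (\<Union>i\<in>I. W i)"
    by (intro hull_minimal convex_convex_hull UN_least hull_mono) auto
  show "convex hull (\<Union>i\<in>I. W i) \<subseteq> convex hull (\<Union>i\<in>I. convex hull W i)"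
    by (intro hull_mono UN_mono hull_subset) auto
qed

lemma cayley_convex_hull:
  "cayley (\<lambda>i. convex hull V i) = convex hull (\<Union>i. V i \<times> {axis i 1})"
proof -
  have "cayley (\<lambda>i. convex hull V i) = convex hull (\<Union>i. convex hull (V i \<times> {axis i 1}))"
    by (simp add: cayley_eq_convex_hull_slices convex_hull_Times)
  also have "\<dots> = convex hull (\<Union>i. V i \<times> {axis i 1})"
    by (rule convex_hull_Union_convex_hull)
  finally show ?thesis .
qed

locale cayley_segments =
  fixes a d :: "'n::finite \<Rightarrow> real^'n"
  assumes direction_nonzero: "d i \<noteq> 0"
begin

definition lower :: "'n \<Rightarrow> (real^'n) \<times> (real^'n)" where
  "lower i = (a i, axis i 1)"

definition upper :: "'n \<Rightarrow> (real^'n) \<times> (real^'n)" where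
  "upper i = (a i + d i, axis i 1)"

definition vertices :: "((real^'n) \<times> (real^'n)) set" where
  "vertices = (\<Union>i. {a i, a i + d i} \<times> {axis i 1})"

lemma finite_vertices: "finite vertices"
  by (simp add: vertices_def)

lemma vertices_eq_range: "vertices = range lower \<union> range upper"
  by (auto simp: vertices_def lower_def upper_def)

lemma inj_lower: "inj lower"
  by (rule injI) (simp add: lower_def axis_eq_axis)

lemma inj_upper: "inj upper"
  by (rule injI) (simp add: upper_def axis_eq_axis)

lemma lower_neq_upper: "lower i \<noteq> upper j"
  using direction_nonzero by (auto simp: lower_def upper_def axis_eq_axis)

lemma range_lower_upper_disjoint: "range lower \<inter> range upper = {}"
  using lower_neq_upper by blast

lemma card_vertices: "card vertices = 2 * CARD('n)"
  using inj_lower inj_upper range_lower_upper_disjoint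
  by (simp add: vertices_eq_range card_Un_disjoint card_image)

lemma sum_vertices: "sum F vertices = (\<Sum>i\<in>UNIV. F (lower i)) + (\<Sum>i\<in>UNIV. F (upper i))"
  using inj_lower inj_upper range_lower_upper_disjoint
  by (simp add: vertices_eq_range sum.union_disjoint sum.reindex)

lemma affine_dependent_vertices_if_dependent_directions:
  assumes "(\<Sum>i\<in>UNIV. c i *\<^sub>R d i) = 0" and "c k \<noteq> 0"
  shows "affine_dependent vertices"
proof -
  define w where "w p = (if p \<in> range upper then c (inv upper p) else - c (inv lower p))" for p
  have w_lower: "w (lower i) = - c i" and w_upper: "w (upper i) = c i" for i
    using lower_neq_upper by (auto simp: w_def inj_lower inj_upper)
  have "(\<Sum>p\<in>vertices. w p *\<^sub>R p) = (\<Sum>i\<in>UNIV. c i *\<^sub>R upper i - c i *\<^sub>R lower i)"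
    by (simp add: sum_vertices w_lower w_upper sum.distrib sum_subtractf sum_negf)
  also have "\<dots> = (\<Sum>i\<in>UNIV. (c i *\<^sub>R d i, 0))"
    by (simp add: lower_def upper_def algebra_simps)
  also have "\<dots> = 0"
    using assms(1) by (simp add: prod_eq_iff fst_sum snd_sum)
  finally have "(\<Sum>p\<in>vertices. w p *\<^sub>R p) = 0" .
  moreover have "sum w vertices = 0"
    by (simp add: sum_vertices w_lower w_upper sum_negf)
  moreover have "upper k \<in> vertices" "w (upper k) \<noteq> 0"
    using assms(2) by (auto simp: vertices_eq_range w_upper)
  ultimately show ?thesis
    unfolding affine_dependent_explicit_finite[OF finite_vertices] by blast
qed

lemma dependent_directions_if_affine_dependent_vertices:
  assumes "affine_dependent vertices"
  obtains c k where "(\<Sum>i\<in>UNIV. c i *\<^sub>R d i) = 0" and "c k \<noteq> 0"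
proof -
  obtain w where w: "sum w vertices = 0" "\<exists>v\<in>vertices. w v \<noteq> 0"
      "(\<Sum>v\<in>vertices. w v *\<^sub>R v) = 0"
    using assms unfolding affine_dependent_explicit_finite[OF finite_vertices] by blast
  define wl where "wl i = w (lower i)" for i
  define wu where "wu i = w (upper i)" for i
  have comb: "(\<Sum>i\<in>UNIV. wl i *\<^sub>R lower i + wu i *\<^sub>R upper i) = 0"
    using w(3) by (simp add: sum_vertices wl_def wu_def sum.distrib)
  have opposite: "wl i = - wu i" for i
  proof -
    have "snd (\<Sum>j\<in>UNIV. wl j *\<^sub>R lower j + wu j *\<^sub>R upper j) $ i = wl i + wu i"
      by (simp add: snd_sum sum_component lower_def upper_def axis_def if_distrib cong: if_cong)
    then show ?thesis
      using comb by simp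
  qed
  have "fst (\<Sum>i\<in>UNIV. wl i *\<^sub>R lower i + wu i *\<^sub>R upper i) = (\<Sum>i\<in>UNIV. wu i *\<^sub>R d i)"
    by (simp add: fst_sum lower_def upper_def opposite algebra_simps)
  then have "(\<Sum>i\<in>UNIV. wu i *\<^sub>R d i) = 0"
    using comb by simp
  moreover obtain k where "wu k \<noteq> 0"
    using w(2) opposite by (auto simp: vertices_eq_range wl_def wu_def)
  ultimately show thesis by (rule that)
qed

lemma affine_independent_vertices_iff:
  "\<not> affine_dependent vertices \<longleftrightarrow> inj d \<and> independent (range d)"
proof -
  have "affine_dependent vertices \<longleftrightarrow> (\<exists>c k. (\<Sum>i\<in>UNIV. c i *\<^sub>R d i) = 0 \<and> c k \<noteq> 0)"
    by (blast intro: affine_dependent_vertices_if_dependent_directions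
        elim: dependent_directions_if_affine_dependent_vertices)
  then show ?thesis
    unfolding inj_independent_iff_sum_eq_0 by blast
qed

lemma aff_dim_segment: "aff_dim (closed_segment (a i) (a i + d i)) = 1"
  using direction_nonzero by (simp add: segment_convex_hull aff_dim_convex_hull)

lemma is_segment_segment: "is_segment (closed_segment (a i) (a i + d i))"
  unfolding is_segment_def aff_dim_segment by (simp add: segment_convex_hull polytope_convex_hull)

lemma fully_mixed_segments: "fully_mixed (\<lambda>i. closed_segment (a i) (a i + d i))"
  by (simp add: fully_mixed_def aff_dim_segment)

lemma cayley_segments_eq: "cayley (\<lambda>i. closed_segment (a i) (a i + d i)) = convex hull vertices"
  using cayley_convex_hull[of "\<lambda>i. {a i, a i + d i}"]
  by (simp add: segment_convex_hull vertices_def)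

lemma simplex_cayley_segments:
  assumes "inj d" and "independent (range d)"
  shows "(2 * int CARD('n) - 1) simplex (cayley (\<lambda>i. closed_segment (a i) (a i + d i)))"
  unfolding simplex_def cayley_segments_eq
  using assms affine_independent_vertices_iff card_vertices by (intro exI[of _ vertices]) simp

end

lemma two_le_card_extreme_points:
  fixes S :: "'a::euclidean_space set"
  assumes "polytope S" and "aff_dim S \<ge> 1"
  shows "2 \<le> card {x. x extreme_point_of S}"
proof -
  let ?X = "{x. x extreme_point_of S}"
  have "finite ?X"
    using assms(1) by (simp add: finite_polyhedron_extreme_points polytope_imp_polyhedron)
  moreover have "S = convex hull ?X"
    using assms(1) by (intro Krein_Milman_Minkowski polytope_imp_compact polytope_imp_convex)
  then have "aff_dim ?X = aff_dim S"
    by (metis aff_dim_convex_hull)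
  ultimately show ?thesis
    using aff_dim_le_card[of ?X] assms(2) by linarith
qed

lemma const_if_sum_eq_card_mult:
  fixes f :: "'i::finite \<Rightarrow> nat"
  assumes "(\<Sum>j\<in>UNIV. f j) = k * CARD('i)" and "\<And>j. k \<le> f j"
  shows "f i = k"
proof -
  have "(\<Sum>j\<in>UNIV. f j - k) = 0"
    using assms by (simp add: sum_subtractf_nat)
  then have "f i - k = 0"
    by simp
  then show ?thesis
    using assms(2)[of i] by linarith
qed

lemma vertices_of_cayley_simplex:
  fixes P :: "'n::finite \<Rightarrow> (real^'n) set"
  assumes "\<And>i. polytope (P i)" and "\<not> affine_dependent C" and "cayley P = convex hull C"
  shows "C = (\<Union>i. {x. x extreme_point_of P i} \<times> {axis i 1})"
proof -
  have compact: "compact (P i)" and convex: "convex (P i)" for i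
    using assms(1) by (simp_all add: polytope_imp_compact polytope_imp_convex)
  have "p \<in> C \<longleftrightarrow> (\<exists>i x. p = (x, axis i 1) \<and> x extreme_point_of P i)" for p
  proof -
    have "p \<in> C \<longleftrightarrow> p extreme_point_of cayley P"
      unfolding assms(3) by (rule extreme_point_of_convex_hull_affine_independent[OF assms(2), symmetric])
    also have "\<dots> \<longleftrightarrow> (\<exists>i x. p = (x, axis i 1) \<and> x extreme_point_of P i)"
      by (rule extreme_point_of_cayley[OF compact convex])
    finally show ?thesis .
  qed
  then show ?thesis
    by auto
qed

lemma segments_if_cayley_simplex:
  fixes P :: "'n::finite \<Rightarrow> (real^'n) set"
  assumes polytope: "\<And>i. polytope (P i)" and "fully_mixed P"
    and "(2 * int CARD('n) - 1) simplex (cayley P)"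
  obtains a d where "\<And>i. P i = closed_segment (a i) (a i + d i)" and "\<And>i. d i \<noteq> 0"
    and "\<not> affine_dependent (cayley_segments.vertices a d)"
proof -
  obtain C where C: "\<not> affine_dependent C" "int (card C) = (2 * int CARD('n) - 1) + 1"
      "cayley P = convex hull C"
    using assms(3) unfolding simplex_def by blast
  define X where "X i = {x. x extreme_point_of P i}" for i
  have C_eq: "C = (\<Union>i. X i \<times> {axis i 1})"
    unfolding X_def using polytope C(1,3) by (rule vertices_of_cayley_simplex)
  have finite_X: "finite (X i)" for i
    using polytope by (simp add: X_def finite_polyhedron_extreme_points polytope_imp_polyhedron)
  have "card C = 2 * CARD('n)"
    using C(2) by linarith
  then have "(\<Sum>i\<in>UNIV. card (X i)) = 2 * CARD('n)"
    unfolding C_eq by (subst (asm) card_UN_disjoint) (auto simp: finite_X axis_eq_axis)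
  moreover have "2 \<le> card (X i)" for i
    using assms(2) polytope by (simp add: X_def fully_mixed_def two_le_card_extreme_points)
  ultimately have "card (X i) = 2" for i
    by (rule const_if_sum_eq_card_mult)
  then have "\<exists>b c. X i = {b, c} \<and> b \<noteq> c" for i
    unfolding card_2_iff .
  then obtain b c where bc: "X i = {b i, c i}" "b i \<noteq> c i" for i
    by metis
  define d where "d i = c i - b i" for i
  have "P i = convex hull X i" for i
    unfolding X_def using polytope by (intro Krein_Milman_Minkowski polytope_imp_compact polytope_imp_convex)
  then have P: "P i = closed_segment (b i) (b i + d i)" for i
    using bc by (simp add: d_def segment_convex_hull)
  have "d i \<noteq> 0" for i
    using bc(2)[of i] by (auto simp: d_def)
  then interpret cayley_segments b d
    by unfold_locales
  have "C = vertices"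
    by (simp add: C_eq bc vertices_def d_def)
  then show thesis
    using that P direction_nonzero C(1) by blast
qed

theorem lemma2p4:
  fixes P :: "'n::finite \<Rightarrow> (real^'n) set"
  assumes "\<forall>i. polytope (P i)"
  shows "(fully_mixed P \<and> (2 * int CARD('n) - 1) simplex (cayley P)) \<longleftrightarrow>
         ((\<forall>i. is_segment (P i)) \<and>
          (\<exists>a d. (\<forall>i. P i = closed_segment (a i) (a i + d i)) \<and>
                 inj d \<and> independent (range d)))"
proof
  assume "fully_mixed P \<and> (2 * int CARD('n) - 1) simplex (cayley P)"
  then have "fully_mixed P" and "(2 * int CARD('n) - 1) simplex (cayley P)"
    by auto
  then obtain a d where P: "\<And>i. P i = closed_segment (a i) (a i + d i)"
    and "\<And>i. d i \<noteq> 0" and independent: "\<not> affine_dependent (cayley_segments.vertices a d)"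
    using segments_if_cayley_simplex[of P, OF assms[rule_format]] by blast
  then interpret cayley_segments a d
    by unfold_locales
  have "inj d \<and> independent (range d)"
    using independent affine_independent_vertices_iff by simp
  then show "(\<forall>i. is_segment (P i)) \<and>
      (\<exists>a d. (\<forall>i. P i = closed_segment (a i) (a i + d i)) \<and> inj d \<and> independent (range d))"
    using P is_segment_segment by (intro conjI allI exI[of _ a] exI[of _ d]) auto
next
  assume "(\<forall>i. is_segment (P i)) \<and>
      (\<exists>a d. (\<forall>i. P i = closed_segment (a i) (a i + d i)) \<and> inj d \<and> independent (range d))"
  then obtain a d where P: "\<And>i. P i = closed_segment (a i) (a i + d i)"
    and d: "inj d" "independent (range d)"
    by blast
  have "d i \<noteq> 0" for i
    using d(2) by (metis dependent_zero rangeI)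
  then interpret cayley_segments a d
    by unfold_locales
  have "P = (\<lambda>i. closed_segment (a i) (a i + d i))"
    by (simp add: fun_eq_iff P)
  then show "fully_mixed P \<and> (2 * int CARD('n) - 1) simplex (cayley P)"
    using fully_mixed_segments simplex_cayley_segments[OF d] by simp
qed

end
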